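(* Let $X$ be an analytic planar vector field having an isochronous center, with a first integral $H$, and suppose there exists a differentiable linearization $L$ (a local diffeomorphism defined in a neighborhood of the center) conjugating $X$ with the linear vector field $X_L=-\omega v\frac{\partial}{\partial u}+\omega u\frac{\partial}{\partial v}$, $\omega>0$, i.e. $X_L(u,v)=\left(DL\cdot X\right)|_{L^{-1}(u,v)}$. For $\epsilon\in\mathbb{R}$ let $$\Phi_{L,\epsilon}(u,v)=\left(\frac{(1-\epsilon^{2}\omega^{2})u-2\epsilon\omega v}{\epsilon^{2}\omega^{2}+1},\ \frac{2\epsilon\omega u+(1-\epsilon^{2}\omega^{2})v}{\epsilon^{2}\omega^{2}+1}\right)$$ and let $\widetilde{\Phi}_\epsilon=L^{-1}\circ\Phi_{L,\epsilon}\circ L$ (the pseudo-KHK map of $X$). Then: (a) $X$ is a Lie symmetry of $\widetilde{\Phi}_\epsilon$; (b) $H$ is a first integral of $\widetilde{\Phi}_\epsilon$ (as it is of $X$); (c) on each closed curve $C_h=\{H=h\}$ contained in the domain of definition of $L$, the restriction $\widetilde{\Phi}_\epsilon|_{C_h}$ is conjugate to a rotation, and for any fixed $\epsilon$ the rotation number $\rho_\epsilon(h)$ is constant (independent of $h$); (d) $\widetilde{\Phi}_\epsilon$ preserves a measure absolutely continuous with respect to the Lebesgue measure.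
   Context: An isochronous center is a singular point surrounded by periodic orbits all having the same period. A function $H$ is a first integral of a map $F$ if $H\circ F=H$. A vector field $X$ is a Lie symmetry of a map $F$ if $X(F(\mathbf{x}))=DF(\mathbf{x})\,X(\mathbf{x})$. $\Phi_{L,\epsilon}$ is the KHK map of $X_L$. *)

theory Defs
  imports "HOL-Analysis.Analysis"
begin

definition real_analytic2 :: "(real \<times> real \<Rightarrow> real) \<Rightarrow> (real \<times> real) set \<Rightarrow> bool" where
  "real_analytic2 g U \<longleftrightarrow>
     (\<forall>p\<in>U. \<exists>r>0. \<exists>a :: nat \<Rightarrow> nat \<Rightarrow> real. \<forall>h. norm h < r \<longrightarrow>
        ((\<lambda>(i,j). a i j * fst h ^ i * snd h ^ j) has_sum g (p + h)) UNIV)"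

definition analytic_field :: "(real \<times> real \<Rightarrow> real \<times> real) \<Rightarrow> (real \<times> real) set \<Rightarrow> bool" where
  "analytic_field X U \<longleftrightarrow> real_analytic2 (\<lambda>x. fst (X x)) U \<and> real_analytic2 (\<lambda>x. snd (X x)) U"

definition isochronous_center :: "(real \<times> real \<Rightarrow> real \<times> real) \<Rightarrow> (real \<times> real) set \<Rightarrow> real \<times> real \<Rightarrow> bool" where
  "isochronous_center X U p \<longleftrightarrow> p \<in> U \<and> X p = 0 \<and>
     (\<exists>N T. open N \<and> p \<in> N \<and> N \<subseteq> U \<and> T > 0 \<and>
        (\<forall>q\<in>N - {p}. \<exists>x :: real \<Rightarrow> real \<times> real. x 0 = q \<and>
            (\<forall>t. x t \<in> U \<and> (x has_vector_derivative X (x t)) (at t)) \<and>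
            (\<forall>t. x (t + T) = x t) \<and> (\<forall>s. 0 < s \<and> s < T \<longrightarrow> x s \<noteq> q)))"

definition first_integral_field :: "(real \<times> real \<Rightarrow> real) \<Rightarrow> (real \<times> real \<Rightarrow> real \<times> real) \<Rightarrow> (real \<times> real) set \<Rightarrow> bool" where
  "first_integral_field H X U \<longleftrightarrow>
     (\<forall>(x :: real \<Rightarrow> real \<times> real) a b. a \<le> b \<longrightarrow>
        (\<forall>t\<in>{a..b}. x t \<in> U \<and> (x has_vector_derivative X (x t)) (at t within {a..b})) \<longrightarrow>
        H (x a) = H (x b))"

definition local_diffeo :: "(real \<times> real \<Rightarrow> real \<times> real) \<Rightarrow> (real \<times> real) set \<Rightarrow> bool" where
  "local_diffeo L V \<longleftrightarrow> open V \<and> L differentiable_on V \<and> inj_on L V \<and> open (L ` V) \<and>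
     (the_inv_into V L) differentiable_on (L ` V)"

definition XL :: "real \<Rightarrow> real \<times> real \<Rightarrow> real \<times> real" where
  "XL \<omega> uv = (- \<omega> * snd uv, \<omega> * fst uv)"

definition Phi_L :: "real \<Rightarrow> real \<Rightarrow> real \<times> real \<Rightarrow> real \<times> real" where
  "Phi_L \<omega> \<epsilon> uv = (((1 - \<epsilon>^2 * \<omega>^2) * fst uv - 2 * \<epsilon> * \<omega> * snd uv) / (\<epsilon>^2 * \<omega>^2 + 1),
                     (2 * \<epsilon> * \<omega> * fst uv + (1 - \<epsilon>^2 * \<omega>^2) * snd uv) / (\<epsilon>^2 * \<omega>^2 + 1))"

definition pseudo_khk :: "(real \<times> real \<Rightarrow> real \<times> real) \<Rightarrow> (real \<times> real) set \<Rightarrow> real \<Rightarrow> real \<Rightarrow> real \<times> real \<Rightarrow> real \<times> real" where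
  "pseudo_khk L V \<omega> \<epsilon> = the_inv_into V L \<circ> Phi_L \<omega> \<epsilon> \<circ> L"

text \<open>Region where the pseudo-KHK map is considered: points of V whose whole L-image circle
  (an orbit of X_L) lies in L(V), i.e. the union of the closed orbits contained in the domain of L.\<close>
definition khk_domain :: "(real \<times> real \<Rightarrow> real \<times> real) \<Rightarrow> (real \<times> real) set \<Rightarrow> (real \<times> real) set" where
  "khk_domain L V = {x \<in> V. \<forall>y. norm y = norm (L x) \<longrightarrow> y \<in> L ` V}"

definition rot :: "real \<Rightarrow> real \<times> real \<Rightarrow> real \<times> real" where
  "rot a uv = (cos a * fst uv - sin a * snd uv, sin a * fst uv + cos a * snd uv)"

definition closed_curve :: "(real \<times> real) set \<Rightarrow> bool" where
  "closed_curve C \<longleftrightarrow> (\<exists>g. simple_path g \<and> pathfinish g = pathstart g \<and> path_image g = C)"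

end

theory Submission
  imports Defs
begin

(*
  Through L the pseudo-KHK map becomes the KHK map of the linear centre, which is the rotation
  by 2 arctan (\<epsilon> \<omega>); every part of the statement is a property of this rotation carried
  back by L.  The rotation commutes with the linear field XL, which gives the Lie symmetry by
  the chain rule.  L^-1 maps arcs of circles about 0 inside L(V) onto solutions of X, so H is
  constant on their images.  A level curve C_h inside V is mapped by L onto a whole circle: the
  circle through one of its points lies in L(C_h) by connectedness of the set of admissible
  angles, and an injective image of a circle inside a simple closed curve is all of it; a
  rescaling of L then conjugates the map on every C_h to the same rotation.  Finally the
  rotation is a product of three shears, so it preserves Lebesgue measure; hence the pullback
  of Lebesgue measure by L is invariant, and its Radon-Nikodym density, positive and finite
  almost everywhere, can be chosen strictly positive.
*)

section \<open>Rotations of the plane\<close>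

lemma rot_as_complex:
  "rot t y = (Re (cis t * Complex (fst y) (snd y)), Im (cis t * Complex (fst y) (snd y)))"
  by (simp add: rot_def)

lemma rot_0 [simp]: "rot 0 y = y"
  by (simp add: rot_def)

lemma norm_rot [simp]: "norm (rot t y) = norm y"
proof -
  have "norm (rot t y) = cmod (cis t * Complex (fst y) (snd y))"
    by (simp only: rot_as_complex norm_prod_def cmod_def real_norm_def power2_abs fst_conv snd_conv)
  also have "\<dots> = cmod (Complex (fst y) (snd y))"
    by (simp add: norm_mult)
  also have "\<dots> = norm y"
    by (simp add: norm_prod_def cmod_def)
  finally show ?thesis .
qed

lemma continuous_on_rot: "continuous_on S (rot t)"
  unfolding rot_def by (intro continuous_intros)

lemma linear_rot: "linear (rot t)"
  by (rule linearI) (auto simp: rot_def algebra_simps)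

lemma isCont_rot_angle: "isCont (\<lambda>t. rot t y) s"
  unfolding rot_def by (intro continuous_intros)

lemma XL_rot: "XL \<omega> (rot t y) = rot t (XL \<omega> y)"
  by (simp add: XL_def rot_def algebra_simps)

lemma rot_has_vector_derivative:
  "((\<lambda>s. rot (\<omega> * s) y) has_vector_derivative XL \<omega> (rot (\<omega> * s) y)) (at s within S)"
  unfolding rot_def XL_def
  by (rule has_vector_derivative_Pair)
     (auto simp: algebra_simps simp flip: has_real_derivative_iff_has_vector_derivative
           intro!: derivative_eq_intros)

lemma ex_rot_eq:
  fixes y z :: "real \<times> real"
  assumes "norm z = norm y"
  shows "\<exists>t. z = rot t y"
proof -
  define y' z' where "y' = Complex (fst y) (snd y)" and "z' = Complex (fst z) (snd z)"
  have norm_eq: "cmod z' = cmod y'"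
    using assms by (simp add: y'_def z'_def norm_prod_def cmod_def)
  have "z' = cis (Arg z' - Arg y') * y'"
  proof (cases "y' = 0")
    case False
    then have "z' \<noteq> 0" using norm_eq by auto
    then show ?thesis
      using False norm_eq by (simp add: cis_divide[symmetric] cis_Arg sgn_div_norm field_simps)
  qed (use norm_eq in simp)
  then show ?thesis
    by (intro exI[of _ "Arg z' - Arg y'"])
       (simp add: rot_as_complex prod_eq_iff flip: y'_def, simp add: z'_def)
qed

lemma Phi_L_eq_rot: "Phi_L \<omega> \<epsilon> = rot (2 * arctan (\<epsilon> * \<omega>))"
proof
  fix y :: "real \<times> real"
  define a where "a = \<epsilon> * \<omega>"
  have s: "sqrt (1 + a\<^sup>2) ^ 2 = 1 + a\<^sup>2" by simp
  have cos2: "cos (2 * arctan a) = (1 - a\<^sup>2) / (a\<^sup>2 + 1)"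
    unfolding cos_double cos_arctan sin_arctan
    by (simp add: power_divide s diff_divide_distrib[symmetric] add_divide_distrib[symmetric])
  have sin2: "sin (2 * arctan a) = 2 * a / (a\<^sup>2 + 1)"
    unfolding sin_double cos_arctan sin_arctan
    by (simp add: s field_simps power2_eq_square[symmetric])
  show "Phi_L \<omega> \<epsilon> y = rot (2 * arctan (\<epsilon> * \<omega>)) y"
    unfolding Phi_L_def rot_def cos2[unfolded a_def] sin2[unfolded a_def]
    by (simp add: a_def power_mult_distrib add_divide_distrib diff_divide_distrib field_simps)
qed

section \<open>Circles in simple closed curves\<close>

lemma inj_sphere_into_circle_surj:
  fixes g :: "'a::euclidean_space \<Rightarrow> complex"
  assumes "2 \<le> DIM('a)" "0 < r"
    and cont: "continuous_on (sphere a r) g" and inj: "inj_on g (sphere a r)"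
    and into: "g ` sphere a r \<subseteq> sphere 0 1"
  shows "g ` sphere a r = sphere 0 1"
proof (rule ccontr)
  assume "g ` sphere a r \<noteq> sphere 0 1"
  then obtain q where q: "q \<in> sphere 0 1" "q \<notin> g ` sphere a r"
    using into by blast
  \<comment> \<open>A circle with a point removed is a line, and a circle does not embed in a line.\<close>
  have "(sphere 0 1 - {q}) homeomorphic {x::complex. \<i> \<bullet> x = 0}"
    using q(1) by (intro homeomorphic_punctured_sphere_hyperplane) auto
  then obtain h k where hk: "homeomorphism (sphere 0 1 - {q}) {x::complex. \<i> \<bullet> x = 0} h k"
    by (auto simp: homeomorphic_def)
  have g_into: "g ` sphere a r \<subseteq> sphere 0 1 - {q}"
    using into q(2) by blast
  have "continuous_on (sphere a r) (Re \<circ> h \<circ> g)"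
    using hk g_into unfolding homeomorphism_def
    by (intro continuous_on_compose cont continuous_intros) (auto elim: continuous_on_subset)
  moreover have "inj_on (Re \<circ> h \<circ> g) (sphere a r)"
  proof (rule comp_inj_on[OF inj comp_inj_on])
    show "inj_on h (g ` sphere a r)"
      using g_into by (intro inj_on_inverseI[where g = k]) (auto intro: homeomorphism_apply1[OF hk])
    have "inj_on Re {x::complex. \<i> \<bullet> x = 0}"
      by (auto simp: inj_on_def complex_eq_iff inner_complex_def)
    moreover have "h ` g ` sphere a r \<subseteq> {x::complex. \<i> \<bullet> x = 0}"
      using hk g_into by (auto simp: homeomorphism_def)
    ultimately show "inj_on Re (h ` g ` sphere a r)"
      by (rule inj_on_subset)
  qed
  ultimately have "DIM('a) \<le> DIM(real)"
    using \<open>0 < r\<close> by (rule no_embedding_sphere_lowdim)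
  with \<open>2 \<le> DIM('a)\<close> show False by simp
qed

lemma closed_curve_inj_sphere_image:
  fixes f :: "'a::euclidean_space \<Rightarrow> real \<times> real"
  assumes "closed_curve K" "2 \<le> DIM('a)" "0 < r"
    and cont: "continuous_on (sphere a r) f" and inj: "inj_on f (sphere a r)"
    and into: "f ` sphere a r \<subseteq> K"
  shows "f ` sphere a r = K"
proof -
  obtain \<gamma> where "simple_path \<gamma>" "pathfinish \<gamma> = pathstart \<gamma>" "path_image \<gamma> = K"
    using \<open>closed_curve K\<close> by (auto simp: closed_curve_def)
  then have "K homeomorphic sphere (0::complex) 1"
    using homeomorphic_simple_path_image_circle[of \<gamma> 1 0] by simp
  then obtain h k where hk: "homeomorphism K (sphere (0::complex) 1) h k"
    by (auto simp: homeomorphic_def)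
  have K: "h ` K = sphere 0 1" "k ` sphere 0 1 = K" "\<And>x. x \<in> K \<Longrightarrow> k (h x) = x"
    and cont_h: "continuous_on K h"
    using hk by (auto simp: homeomorphism_def)
  have "(h \<circ> f) ` sphere a r = sphere 0 1"
  proof (rule inj_sphere_into_circle_surj[OF \<open>2 \<le> DIM('a)\<close> \<open>0 < r\<close>])
    show "continuous_on (sphere a r) (h \<circ> f)"
      using cont_h into cont by (intro continuous_on_compose) (auto elim: continuous_on_subset)
    show "inj_on (h \<circ> f) (sphere a r)"
      using into K(3) by (intro comp_inj_on[OF inj] inj_on_inverseI[where g = k]) auto
    show "(h \<circ> f) ` sphere a r \<subseteq> sphere 0 1"
      using into K(1) by auto
  qed
  have "f ` sphere a r = (k \<circ> (h \<circ> f)) ` sphere a r"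
    using into K(3) by (intro image_cong) (simp_all add: image_subset_iff)
  also have "\<dots> = k ` (h \<circ> f) ` sphere a r"
    by (rule image_comp[symmetric])
  also have "\<dots> = K"
    using \<open>(h \<circ> f) ` sphere a r = sphere 0 1\<close> K(2) by simp
  finally show ?thesis .
qed

lemma closed_curve_two_points:
  assumes "closed_curve K"
  obtains x y where "x \<in> K" "y \<in> K" "x \<noteq> y"
proof -
  obtain g where g: "simple_path g" "path_image g = K"
    using assms by (auto simp: closed_curve_def)
  then have "g 0 \<noteq> g (1/2)"
    unfolding simple_path_def loop_free_def by force
  moreover have "g 0 \<in> K" "g (1/2) \<in> K"
    using g(2) by (auto simp: path_image_def)
  ultimately show ?thesis
    using that by blast
qed

lemma ex_sphere_dist_eq:
  fixes y :: "real \<times> real"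
  assumes "0 \<le> r"
  obtains x where "x \<in> sphere 0 r" "dist x y = \<bar>norm y - r\<bar>"
proof (cases "y = 0")
  case True
  then show ?thesis
    using that[of "(r, 0)"] assms by simp
next
  case False
  have "(r / norm y) *\<^sub>R y - y = (r / norm y - 1) *\<^sub>R y"
    by (simp add: algebra_simps)
  then have "dist ((r / norm y) *\<^sub>R y) y = \<bar>(r / norm y - 1) * norm y\<bar>"
    by (simp add: dist_norm abs_mult)
  also have "\<dots> = \<bar>norm y - r\<bar>"
    using False by (simp add: left_diff_distrib abs_minus_commute)
  finally show ?thesis
    using that[of "(r / norm y) *\<^sub>R y"] False assms by simp
qed

lemma open_Collect_sphere_subset:
  fixes W :: "(real \<times> real) set"
  assumes open_W: "open W"
  shows "open {w :: real \<times> real. sphere 0 (norm w) \<subseteq> W}" (is "open ?C")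
proof (rule openI)
  fix w assume w: "w \<in> ?C"
  have "sphere 0 (norm w) \<inter> - W = {}"
    using w by auto
  then obtain d where d: "0 < d" "\<forall>x\<in>sphere 0 (norm w). \<forall>y\<in>- W. d \<le> dist x y"
    using separate_compact_closed[of "sphere 0 (norm w)" "- W"] open_W by auto
  have "y \<in> W" if "\<bar>norm y - norm w\<bar> < d" for y
  proof -
    obtain x where x: "x \<in> sphere 0 (norm w)" "dist x y = \<bar>norm y - norm w\<bar>"
      using ex_sphere_dist_eq[OF norm_ge_zero] .
    show ?thesis
    proof (rule ccontr)
      assume "y \<notin> W"
      then have "d \<le> dist x y"
        using d(2) x(1) by blast
      then show False
        using x(2) that by simp
    qed
  qed
  moreover have "\<bar>norm w' - norm w\<bar> < d" if "w' \<in> ball w d" for w'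
    using that norm_triangle_ineq3[of w' w] by (simp add: dist_norm norm_minus_commute)
  ultimately have "ball w d \<subseteq> ?C"
    by auto
  then show "\<exists>e>0. ball w e \<subseteq> ?C"
    using d by blast
qed

section \<open>Lebesgue measure and densities\<close>

lemma distr_lborel_vertical_shear:
  fixes g :: "'a::euclidean_space \<Rightarrow> 'b::euclidean_space"
  assumes "g \<in> borel_measurable borel"
  shows "distr lborel borel (\<lambda>(x, y). (x, y + g x)) = (lborel :: ('a \<times> 'b) measure)"
proof (rule measure_eqI)
  fix A :: "('a \<times> 'b) set"
  let ?S = "\<lambda>(x, y). (x, y + g x)"
  assume "A \<in> sets (distr lborel borel ?S)"
  then have A: "A \<in> sets borel" by simp
  then have SA': "A \<in> sets (lborel \<Otimes>\<^sub>M lborel)" unfolding lborel_prod by simp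
  have S_meas: "?S \<in> borel_measurable borel"
    unfolding case_prod_beta
    by (intro borel_measurable_Pair borel_measurable_add measurable_compose[OF _ assms]
        borel_measurable_continuous_onI continuous_intros)
  then have SA: "?S -` A \<in> sets (lborel \<Otimes>\<^sub>M lborel)"
    unfolding lborel_prod using measurable_sets[OF _ A, of ?S borel] by simp
  have "emeasure (distr lborel borel ?S) A = emeasure (lborel \<Otimes>\<^sub>M lborel) (?S -` A)"
    using emeasure_distr[of ?S lborel borel A] S_meas A by (simp add: lborel_prod)
  also have "\<dots> = (\<integral>\<^sup>+x. emeasure lborel (Pair x -` ?S -` A) \<partial>lborel)"
    by (rule lborel.emeasure_pair_measure_alt[OF SA])
  also have "\<dots> = (\<integral>\<^sup>+x. emeasure lborel (Pair x -` A) \<partial>lborel)"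
  proof (rule nn_integral_cong)
    fix x :: 'a
    have A_x: "Pair x -` A \<in> sets borel"
      using sets_Pair1[OF SA'] by simp
    have "Pair x -` ?S -` A = (+) (g x) -` Pair x -` A"
      by (auto simp: add.commute)
    also have "emeasure lborel \<dots> = emeasure (distr lborel borel ((+) (g x))) (Pair x -` A)"
      using A_x by (simp add: emeasure_distr)
    finally show "emeasure lborel (Pair x -` ?S -` A) = emeasure lborel (Pair x -` A)"
      by (simp add: lborel_distr_plus)
  qed
  also have "\<dots> = emeasure lborel A"
    using lborel.emeasure_pair_measure_alt[OF SA'] by (simp add: lborel_prod)
  finally show "emeasure (distr lborel borel ?S) A = emeasure lborel A" .
qed simp

lemma distr_lborel_swap:
  "distr lborel borel (\<lambda>(x, y). (y, x)) = (lborel :: ('a::euclidean_space \<times> 'b::euclidean_space) measure)"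
proof -
  have "(lborel :: ('a \<times> 'b) measure) = distr lborel lborel (\<lambda>(x, y). (y, x))"
    using lborel_pair.distr_pair_swap[where 'a = 'a and 'b = 'b] by (simp only: lborel_prod)
  also have "\<dots> = distr lborel borel (\<lambda>(x, y). (y, x))"
    by (rule distr_cong) simp_all
  finally show ?thesis ..
qed

lemma distr_lborel_comp:
  fixes f :: "'b::euclidean_space \<Rightarrow> 'c::euclidean_space" and g :: "'a::euclidean_space \<Rightarrow> 'b"
  assumes "f \<in> borel_measurable borel" "g \<in> borel_measurable borel"
    and "distr lborel borel f = lborel" "distr lborel borel g = lborel"
  shows "distr lborel borel (f \<circ> g) = lborel"
  using distr_distr[of f borel borel g lborel] assms by simp

lemma distr_lborel_horizontal_shear:
  fixes g :: "'b::euclidean_space \<Rightarrow> 'a::euclidean_space"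
  assumes "g \<in> borel_measurable borel"
  shows "distr lborel borel (\<lambda>(x, y). (x + g y, y)) = (lborel :: ('a \<times> 'b) measure)"
proof -
  let ?swap = "\<lambda>(x, y). (y, x)"
  have "(\<lambda>(x, y). (x + g y, y)) = (?swap :: 'b \<times> 'a \<Rightarrow> _) \<circ> ((\<lambda>(y, x). (y, x + g y)) \<circ> ?swap)"
    by auto
  moreover have "?swap \<in> borel_measurable (borel :: ('a \<times> 'b) measure)"
    "?swap \<in> borel_measurable (borel :: ('b \<times> 'a) measure)"
    by (auto intro!: borel_measurable_continuous_onI continuous_intros simp: case_prod_beta)
  moreover have "(\<lambda>(y, x). (y, x + g y)) \<in> borel_measurable borel"
    unfolding case_prod_beta
    by (intro borel_measurable_Pair borel_measurable_add measurable_compose[OF _ assms]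
        borel_measurable_continuous_onI continuous_intros)
  ultimately show ?thesis
    using assms by (simp only: distr_lborel_comp measurable_comp distr_lborel_swap distr_lborel_vertical_shear)
qed

lemma Phi_L_eq_shears:
  fixes \<epsilon> \<omega> :: real
  defines "a \<equiv> \<epsilon> * \<omega>"
  shows "Phi_L \<omega> \<epsilon> = (\<lambda>(x, y). (x + - a * y, y)) \<circ> (\<lambda>(x, y). (x, y + 2 * a / (a\<^sup>2 + 1) * x))
      \<circ> (\<lambda>(x, y). (x + - a * y, y))"
proof
  fix z :: "real \<times> real"
  have d: "a\<^sup>2 + 1 \<noteq> 0"
    by (metis add_nonneg_pos zero_le_power2 zero_less_one less_irrefl)
  have sq: "\<epsilon>\<^sup>2 * \<omega>\<^sup>2 = a\<^sup>2"
    by (simp add: a_def power_mult_distrib)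
  have "Phi_L \<omega> \<epsilon> z = (((1 - a\<^sup>2) * fst z - 2 * a * snd z) / (a\<^sup>2 + 1),
      (2 * a * fst z + (1 - a\<^sup>2) * snd z) / (a\<^sup>2 + 1))"
    by (simp add: Phi_L_def sq a_def mult.assoc)
  also have "\<dots> = ((\<lambda>(x, y). (x + - a * y, y)) \<circ> (\<lambda>(x, y). (x, y + 2 * a / (a\<^sup>2 + 1) * x))
      \<circ> (\<lambda>(x, y). (x + - a * y, y))) z"
    using d by (simp add: case_prod_beta prod_eq_iff field_simps) (simp add: power2_eq_square algebra_simps)
  finally show "Phi_L \<omega> \<epsilon> z = ((\<lambda>(x, y). (x + - a * y, y)) \<circ> (\<lambda>(x, y). (x, y + 2 * a / (a\<^sup>2 + 1) * x))
      \<circ> (\<lambda>(x, y). (x + - a * y, y))) z" .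
qed

lemma distr_lborel_Phi_L: "distr lborel borel (Phi_L \<omega> \<epsilon>) = lborel"
proof -
  let ?a = "\<epsilon> * \<omega>"
  have h: "(\<lambda>(x, y). (x + c * y, y)) \<in> borel_measurable borel"
    "(\<lambda>(x, y). (x, y + c * x)) \<in> borel_measurable borel" for c :: real
    by (auto intro!: borel_measurable_continuous_onI continuous_intros simp: case_prod_beta)
  have H: "distr lborel borel (\<lambda>(x, y). (x + - ?a * y, y)) = lborel"
    by (rule distr_lborel_horizontal_shear) simp
  have V: "distr lborel borel (\<lambda>(x, y). (x, y + 2 * ?a / (?a\<^sup>2 + 1) * x)) = lborel"
    by (rule distr_lborel_vertical_shear) simp
  show ?thesis
    unfolding Phi_L_eq_shears
    by (rule distr_lborel_comp[OF measurable_comp[OF h(2) h(1)] h(1) distr_lborel_comp[OF h H V] H])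
qed

lemma lborel_preserving_imp_lebesgue_preserving:
  fixes T :: "'a::euclidean_space \<Rightarrow> 'a"
  assumes "T \<in> borel_measurable borel" and "distr lborel borel T = lborel"
  shows "T \<in> lebesgue \<rightarrow>\<^sub>M lebesgue" and "distr lebesgue lebesgue T = lebesgue"
proof -
  have T_lborel: "T \<in> lborel \<rightarrow>\<^sub>M lborel"
    using assms(1) by simp
  have "distr lebesgue lborel T = distr lborel lborel T"
    by (rule distr_completion[OF T_lborel])
  also have "\<dots> = lborel"
    using assms(2) by (metis distr_cong sets_lborel)
  finally have distr_T: "distr lebesgue lborel T = lborel" .
  have T_leb: "T \<in> lebesgue \<rightarrow>\<^sub>M lborel"
    using T_lborel by (rule measurable_completion)
  show "T \<in> lebesgue \<rightarrow>\<^sub>M lebesgue"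
    using completion.measurable_completion2[OF T_leb] distr_T by simp
  have "completion (distr lebesgue lborel T) = distr lebesgue lebesgue T"
    by (rule completion.completion_distr_eq[OF T_leb]) (simp add: distr_T)
  then show "distr lebesgue lebesgue T = lebesgue"
    using distr_T by simp
qed

lemma lebesgue_vimage_Phi_L:
  assumes "B \<in> sets lebesgue"
  shows "Phi_L \<omega> \<epsilon> -` B \<in> sets lebesgue"
    and "emeasure lebesgue (Phi_L \<omega> \<epsilon> -` B) = emeasure lebesgue B"
proof -
  have "Phi_L \<omega> \<epsilon> \<in> borel_measurable borel"
    unfolding Phi_L_eq_rot by (intro borel_measurable_continuous_onI continuous_on_rot)
  note Phi = lborel_preserving_imp_lebesgue_preserving[OF this distr_lborel_Phi_L]
  show "Phi_L \<omega> \<epsilon> -` B \<in> sets lebesgue"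
    using measurable_sets[OF Phi(1) assms] by simp
  have "emeasure lebesgue B = emeasure (distr lebesgue lebesgue (Phi_L \<omega> \<epsilon>)) B"
    using Phi(2) by simp
  also have "\<dots> = emeasure lebesgue (Phi_L \<omega> \<epsilon> -` B)"
    using emeasure_distr[OF Phi(1) assms] by simp
  finally show "emeasure lebesgue (Phi_L \<omega> \<epsilon> -` B) = emeasure lebesgue B" ..
qed

lemma sigma_finite_lebesgue: "sigma_finite_measure (lebesgue :: 'a::euclidean_space measure)"
proof (unfold sigma_finite_measure_def, intro exI conjI)
  let ?A = "range (\<lambda>n::nat. cball (0::'a) (real n))"
  show "countable ?A" "?A \<subseteq> sets lebesgue"
    by auto
  show "\<Union> ?A = space lebesgue"
    by (auto simp: real_arch_simple)
  show "\<forall>a\<in>?A. emeasure lebesgue a \<noteq> \<infinity>"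
    using emeasure_lborel_cball_finite[of "0::'a"] by (auto simp: less_top)
qed

lemma (in sigma_finite_measure) ex_positive_real_density:
  assumes ac: "absolutely_continuous M N" and sets_N: "sets N = sets M"
    and sigma_finite_N: "sigma_finite_measure N"
    and D: "D \<in> sets M"
    and null_D: "\<And>A. A \<in> sets M \<Longrightarrow> A \<subseteq> D \<Longrightarrow> emeasure N A = 0 \<Longrightarrow> emeasure M A = 0"
  shows "\<exists>m. m \<in> borel_measurable M \<and> (\<forall>x\<in>D. 0 < m x) \<and>
    (\<forall>A\<in>sets M. A \<subseteq> D \<longrightarrow> emeasure (density M (\<lambda>x. ennreal (m x))) A = emeasure N A)"
proof -
  obtain f where f [measurable]: "f \<in> borel_measurable M" and N: "density M f = N"
    using Radon_Nikodym[OF ac sets_N] by blast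
  have finite_ae: "AE x in M. f x \<noteq> \<infinity>"
    using sigma_finite_iff_density_finite[OF f] sigma_finite_N N by simp
  define Z where "Z = {x \<in> D. f x = 0}"
  have Z: "Z \<in> sets M"
    using D unfolding Z_def by measurable
  have "emeasure N Z = (\<integral>\<^sup>+x. f x * indicator Z x \<partial>M)"
    unfolding N[symmetric] by (rule emeasure_density[OF f Z])
  also have "\<dots> = (\<integral>\<^sup>+x. 0 \<partial>M)"
    by (rule nn_integral_cong) (simp add: Z_def indicator_def)
  finally have "emeasure M Z = 0"
    using null_D[OF Z] by (simp add: Z_def)
  then have nonzero_ae: "AE x in M. x \<in> D \<longrightarrow> f x \<noteq> 0"
    using Z by (intro AE_I'[of Z]) (auto simp: Z_def)
  define m where "m x = (if f x = 0 \<or> f x = \<infinity> then 1 else enn2real (f x))" for x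
  have m: "m \<in> borel_measurable M"
    unfolding m_def by measurable
  have "emeasure (density M (\<lambda>x. ennreal (m x))) A = emeasure N A" if A: "A \<in> sets M" "A \<subseteq> D" for A
  proof -
    have "emeasure (density M (\<lambda>x. ennreal (m x))) A = (\<integral>\<^sup>+x. ennreal (m x) * indicator A x \<partial>M)"
      using m A by (intro emeasure_density) auto
    also have "\<dots> = (\<integral>\<^sup>+x. f x * indicator A x \<partial>M)"
      using finite_ae nonzero_ae
      by (intro nn_integral_cong_AE, eventually_elim)
         (use A(2) in \<open>auto simp: m_def indicator_def ennreal_enn2real less_top\<close>)
    also have "\<dots> = emeasure N A"
      unfolding N[symmetric] by (rule emeasure_density[OF f A(1), symmetric])
    finally show ?thesis .
  qed
  moreover have "0 < m x" for x
    by (auto simp: m_def enn2real_positive_iff less_top zero_less_iff_neq_zero)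
  ultimately show ?thesis
    using m by blast
qed

section \<open>The linearized centre\<close>

locale linearized_center =
  fixes X :: "real \<times> real \<Rightarrow> real \<times> real" and H :: "real \<times> real \<Rightarrow> real"
    and L :: "real \<times> real \<Rightarrow> real \<times> real" and DL :: "real \<times> real \<Rightarrow> real \<times> real \<Rightarrow> real \<times> real"
    and U V :: "(real \<times> real) set" and \<omega> :: real
  assumes first_integral: "first_integral_field H X U"
    and omega_pos: "0 < \<omega>" and V_subset_U: "V \<subseteq> U"
    and local_diffeo_L: "local_diffeo L V"
    and L_conjugates: "\<And>x. x \<in> V \<Longrightarrow> (L has_derivative DL x) (at x) \<and> XL \<omega> (L x) = DL x (X x)"
begin

definition "L_inv = the_inv_into V L"

definition "W = L ` V"

definition "round_core = {w :: real \<times> real. sphere 0 (norm w) \<subseteq> W}"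

lemma open_V: "open V"
  using local_diffeo_L by (simp add: local_diffeo_def)

lemma open_W: "open W"
  using local_diffeo_L by (simp add: local_diffeo_def W_def)

lemma inj_on_L: "inj_on L V"
  using local_diffeo_L by (simp add: local_diffeo_def)

lemma L_inv_L [simp]: "x \<in> V \<Longrightarrow> L_inv (L x) = x"
  unfolding L_inv_def by (simp add: the_inv_into_f_f inj_on_L)

lemma L_L_inv [simp]: "w \<in> W \<Longrightarrow> L (L_inv w) = w"
  unfolding L_inv_def W_def by (simp add: f_the_inv_into_f inj_on_L)

lemma L_inv_in_V: "w \<in> W \<Longrightarrow> L_inv w \<in> V"
  unfolding L_inv_def W_def by (simp add: the_inv_into_into inj_on_L)

lemma L_inv_image_L_image:
  assumes "A \<subseteq> V"
  shows "L_inv ` L ` A = A"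
proof -
  have "L_inv ` L ` A = (\<lambda>x. x) ` A"
    unfolding image_image using assms by (intro image_cong) auto
  then show ?thesis
    by simp
qed

lemma differentiable_on_L: "L differentiable_on V"
  using local_diffeo_L by (simp add: local_diffeo_def)

lemma differentiable_on_L_inv: "L_inv differentiable_on W"
  using local_diffeo_L by (simp add: local_diffeo_def L_inv_def W_def)

lemma continuous_on_L: "continuous_on V L"
  by (rule differentiable_imp_continuous_on[OF differentiable_on_L])

lemma continuous_on_L_inv: "continuous_on W L_inv"
  by (rule differentiable_imp_continuous_on[OF differentiable_on_L_inv])

lemma L_inv_has_derivative:
  assumes "w \<in> W"
  obtains D where "(L_inv has_derivative D) (at w)"
proof -
  have "L_inv differentiable (at w within W)"
    using differentiable_on_L_inv assms by (simp add: differentiable_on_def)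
  then show ?thesis
    using that at_within_open[OF assms open_W] by (auto simp: differentiable_def)
qed

lemma L_inv_derivative_XL:
  assumes w: "w \<in> W" and D: "(L_inv has_derivative D) (at w)"
  shows "D (XL \<omega> w) = X (L_inv w)"
proof -
  define z where "z = L_inv w"
  have z: "z \<in> V" "L z = w"
    using w by (auto simp: z_def L_inv_in_V)
  have DL: "(L has_derivative DL z) (at z)" and XL: "XL \<omega> (L z) = DL z (X z)"
    using L_conjugates[OF z(1)] by auto
  have "(L_inv \<circ> L has_derivative D \<circ> DL z) (at z)"
    using diff_chain_at[OF DL] D z by simp
  moreover have "(L_inv \<circ> L has_derivative id) (at z)"
    by (rule has_derivative_transform_within_open[OF has_derivative_id open_V z(1)]) simp
  ultimately have "D \<circ> DL z = id"
    by (rule has_derivative_unique)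
  then show ?thesis
    using XL z by (metis comp_apply id_apply z_def)
qed

lemma L_inv_rot_has_vector_derivative:
  assumes "rot (\<omega> * s) y \<in> W"
  shows "((\<lambda>s. L_inv (rot (\<omega> * s) y)) has_vector_derivative X (L_inv (rot (\<omega> * s) y))) (at s within S)"
proof -
  obtain D where D: "(L_inv has_derivative D) (at (rot (\<omega> * s) y))"
    using L_inv_has_derivative[OF assms] by blast
  have "(L_inv \<circ> (\<lambda>s. rot (\<omega> * s) y) has_vector_derivative D (XL \<omega> (rot (\<omega> * s) y))) (at s within S)"
    by (rule vector_derivative_diff_chain_within[OF rot_has_vector_derivative has_derivative_at_withinI[OF D]])
  then show ?thesis
    using L_inv_derivative_XL[OF assms D] by (simp add: o_def)
qed

lemma H_L_inv_rot_eq: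
  assumes "\<forall>t\<in>closed_segment a b. rot t y \<in> W"
  shows "H (L_inv (rot a y)) = H (L_inv (rot b y))"
proof -
  have ordered: "H (L_inv (rot a y)) = H (L_inv (rot b y))" if "a \<le> b" "\<forall>t\<in>{a..b}. rot t y \<in> W" for a b
  proof -
    let ?x = "\<lambda>s. L_inv (rot (\<omega> * s) y)"
    have "\<omega> * s \<in> {a..b}" if "s \<in> {a/\<omega>..b/\<omega>}" for s
      using that omega_pos by (auto simp: field_simps)
    then have "\<forall>s\<in>{a/\<omega>..b/\<omega>}. ?x s \<in> U \<and> (?x has_vector_derivative X (?x s)) (at s within {a/\<omega>..b/\<omega>})"
      using that(2) L_inv_in_V V_subset_U L_inv_rot_has_vector_derivative by blast
    moreover have "a/\<omega> \<le> b/\<omega>"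
      using that(1) omega_pos by (simp add: divide_right_mono)
    ultimately have "H (?x (a/\<omega>)) = H (?x (b/\<omega>))"
      using first_integral unfolding first_integral_field_def by (elim allE impE)
    then show ?thesis
      using omega_pos by simp
  qed
  show ?thesis
  proof (cases "a \<le> b")
    case True
    then show ?thesis
      using assms ordered by (simp add: closed_segment_eq_real_ivl)
  next
    case False
    then show ?thesis
      using assms ordered[of b a] by (simp add: closed_segment_eq_real_ivl)
  qed
qed

lemma khk_domain_eq: "khk_domain L V = {x \<in> V. L x \<in> round_core}"
  by (auto simp: khk_domain_def round_core_def W_def)

lemma khk_domain_subset_V: "khk_domain L V \<subseteq> V"
  by (auto simp: khk_domain_eq)

lemma round_core_subset_W: "round_core \<subseteq> W"
  by (auto simp: round_core_def)

lemma rot_in_round_core: "w \<in> round_core \<Longrightarrow> rot t w \<in> round_core"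
  by (simp add: round_core_def)

lemma rot_in_W: "w \<in> round_core \<Longrightarrow> rot t w \<in> W"
  using rot_in_round_core round_core_subset_W by blast

lemma L_inv_in_khk_domain: "w \<in> round_core \<Longrightarrow> L_inv w \<in> khk_domain L V"
  using round_core_subset_W by (auto simp: khk_domain_eq L_inv_in_V)

lemma L_image_khk_domain: "L ` khk_domain L V = round_core"
proof
  show "L ` khk_domain L V \<subseteq> round_core"
    by (auto simp: khk_domain_eq)
  show "round_core \<subseteq> L ` khk_domain L V"
  proof
    fix w assume "w \<in> round_core"
    then have "L_inv w \<in> khk_domain L V" "w = L (L_inv w)"
      using L_inv_in_khk_domain round_core_subset_W by auto
    then show "w \<in> L ` khk_domain L V"
      by blast
  qed
qed

lemma open_round_core: "open round_core"
  unfolding round_core_def by (rule open_Collect_sphere_subset[OF open_W])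

lemma open_khk_domain: "open (khk_domain L V)"
proof -
  have "khk_domain L V = V \<inter> L -` round_core"
    by (auto simp: khk_domain_eq)
  then show ?thesis
    using continuous_open_preimage[OF continuous_on_L open_V open_round_core] by simp
qed

lemma pseudo_khk_eq: "pseudo_khk L V \<omega> \<epsilon> = L_inv \<circ> rot (2 * arctan (\<epsilon> * \<omega>)) \<circ> L"
  by (simp add: pseudo_khk_def Phi_L_eq_rot L_inv_def)

lemma pseudo_khk_Lie_symmetry:
  assumes x: "x \<in> khk_domain L V"
  shows "\<exists>DF. (pseudo_khk L V \<omega> \<epsilon> has_derivative DF) (at x) \<and> X (pseudo_khk L V \<omega> \<epsilon> x) = DF (X x)"
proof -
  let ?R = "rot (2 * arctan (\<epsilon> * \<omega>))"
  have x_V: "x \<in> V" and R_W: "?R (L x) \<in> W"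
    using x by (auto simp: khk_domain_eq rot_in_W)
  obtain D where D: "(L_inv has_derivative D) (at (?R (L x)))"
    using L_inv_has_derivative[OF R_W] by blast
  have DL: "(L has_derivative DL x) (at x)" and XL: "XL \<omega> (L x) = DL x (X x)"
    using L_conjugates[OF x_V] by auto
  have "(?R has_derivative ?R) (at (L x))"
    using linear_rot by (simp add: bounded_linear_imp_has_derivative linear_linear)
  then have "(L_inv \<circ> ?R has_derivative D \<circ> ?R) (at (L x))"
    by (rule diff_chain_at) (use D in simp)
  then have "(L_inv \<circ> ?R \<circ> L has_derivative D \<circ> ?R \<circ> DL x) (at x)"
    by (rule diff_chain_at[OF DL])
  moreover have "X (pseudo_khk L V \<omega> \<epsilon> x) = (D \<circ> ?R \<circ> DL x) (X x)"
    using L_inv_derivative_XL[OF R_W D] XL by (simp add: pseudo_khk_eq XL_rot)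
  ultimately show ?thesis
    by (auto simp: pseudo_khk_eq)
qed

lemma pseudo_khk_first_integral:
  assumes "x \<in> khk_domain L V"
  shows "H (pseudo_khk L V \<omega> \<epsilon> x) = H x"
proof -
  have "H (L_inv (rot 0 (L x))) = H (L_inv (rot (2 * arctan (\<epsilon> * \<omega>)) (L x)))"
    using assms by (intro H_L_inv_rot_eq) (auto simp: khk_domain_eq rot_in_W)
  then show ?thesis
    using assms by (simp add: pseudo_khk_eq khk_domain_eq)
qed

lemma open_rot_angles_in_L_image_level:
  assumes K: "K = {x \<in> U. H x = h}" "K \<subseteq> V"
  shows "open {t. rot t y \<in> L ` K}"
proof (rule openI)
  fix t assume "t \<in> {t. rot t y \<in> L ` K}"
  then obtain x where x: "x \<in> K" "rot t y = L x"
    by auto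
  have "open ((\<lambda>s. rot s y) -` W)"
    by (rule continuous_open_vimage[OF open_W isCont_rot_angle])
  moreover have "t \<in> (\<lambda>s. rot s y) -` W"
    using x K(2) by (auto simp: W_def)
  ultimately obtain d where d: "0 < d" "ball t d \<subseteq> (\<lambda>s. rot s y) -` W"
    by (meson open_contains_ball)
  have "s \<in> {t. rot t y \<in> L ` K}" if s: "s \<in> ball t d" for s
  proof -
    have s_W: "rot s y \<in> W"
      using s d(2) by auto
    have "closed_segment t s \<subseteq> ball t d"
      using s d(1) by (intro closed_segment_subset) auto
    then have "H (L_inv (rot s y)) = H (L_inv (rot t y))"
      using d(2) by (intro H_L_inv_rot_eq[symmetric]) auto
    also have "\<dots> = h"
      using x K by auto
    finally have "L_inv (rot s y) \<in> K"
      using L_inv_in_V[OF s_W] V_subset_U K(1) by auto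
    moreover have "rot s y = L (L_inv (rot s y))"
      using s_W by simp
    ultimately show ?thesis
      by blast
  qed
  then show "\<exists>e>0. ball t e \<subseteq> {t. rot t y \<in> L ` K}"
    using d(1) by blast
qed

lemma rot_L_in_L_image_level:
  assumes K: "closed_curve K" "K = {x \<in> U. H x = h}" "K \<subseteq> V" and x: "x \<in> K"
  shows "rot t (L x) \<in> L ` K"
proof -
  define G where "G = {t. rot t (L x) \<in> L ` K}"
  have "compact K"
    using K(1) by (auto simp: closed_curve_def compact_simple_path_image)
  then have "closed (L ` K)"
    using continuous_on_L K(3) by (intro compact_imp_closed compact_continuous_image) (auto elim: continuous_on_subset)
  then have "closed G"
    unfolding G_def by (metis continuous_closed_vimage isCont_rot_angle vimage_def)
  moreover have "open G"
    unfolding G_def using K(2,3) by (rule open_rot_angles_in_L_image_level)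
  moreover have "0 \<in> G"
    using x by (simp add: G_def)
  ultimately have "G = UNIV"
    using clopen by blast
  then show ?thesis
    by (auto simp: G_def)
qed

lemma L_image_level_eq_sphere:
  assumes K: "closed_curve K" "K = {x \<in> U. H x = h}" "K \<subseteq> V"
  obtains r where "0 < r" "L ` K = sphere 0 r"
proof -
  obtain x0 where x0: "x0 \<in> K" "L x0 \<noteq> 0"
  proof -
    obtain x y where xy: "x \<in> K" "y \<in> K" "x \<noteq> y"
      using closed_curve_two_points[OF K(1)] .
    then have "L x \<noteq> L y"
      using K(3) inj_on_L by (auto simp: inj_on_def)
    then show ?thesis
      using that xy by (cases "L x = 0") auto
  qed
  define r where "r = norm (L x0)"
  have r_pos: "0 < r"
    using x0 by (simp add: r_def)
  have sphere_sub: "sphere 0 r \<subseteq> L ` K"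
  proof
    fix z :: "real \<times> real" assume "z \<in> sphere 0 r"
    then obtain t where "z = rot t (L x0)"
      using ex_rot_eq[of z "L x0"] by (auto simp: r_def)
    then show "z \<in> L ` K"
      using rot_L_in_L_image_level[OF K x0(1)] by simp
  qed
  have L_L_inv_sphere: "L (L_inv z) = z" if "z \<in> sphere 0 r" for z
    using subsetD[OF sphere_sub that] K(3) by (intro L_L_inv) (auto simp: W_def)
  have "L_inv ` sphere 0 r = K"
  proof (rule closed_curve_inj_sphere_image[OF K(1) _ r_pos])
    show "continuous_on (sphere 0 r) L_inv"
      by (rule continuous_on_subset[OF continuous_on_L_inv]) (use sphere_sub K(3) in \<open>auto simp: W_def\<close>)
    show "inj_on L_inv (sphere 0 r)"
      using L_L_inv_sphere by (rule inj_on_inverseI)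
    show "L_inv ` sphere 0 r \<subseteq> K"
    proof (rule image_subsetI)
      fix z :: "real \<times> real" assume "z \<in> sphere 0 r"
      then obtain x where "x \<in> K" "z = L x"
        using sphere_sub by blast
      then show "L_inv z \<in> K"
        using K(3) by auto
    qed
  qed simp
  then have "L ` K = L ` L_inv ` sphere 0 r"
    by simp
  also have "\<dots> = (\<lambda>z. z) ` sphere 0 r"
    unfolding image_image
    using L_L_inv_sphere by (rule image_cong[OF refl])
  finally show ?thesis
    using that r_pos by simp
qed

lemma pseudo_khk_conj_rot_on_level:
  assumes K: "closed_curve K" "K = {x \<in> U. H x = h}" "K \<subseteq> V"
  shows "\<exists>\<phi> \<psi>. homeomorphism K (sphere 0 1) \<phi> \<psi> \<and>
    (\<forall>x\<in>K. \<phi> (pseudo_khk L V \<omega> \<epsilon> x) = rot (2 * arctan (\<epsilon> * \<omega>)) (\<phi> x))"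
proof -
  obtain r where r: "0 < r" "L ` K = sphere 0 r"
    using L_image_level_eq_sphere[OF K] .
  have LK_W: "L ` K \<subseteq> W"
    using K(3) by (auto simp: W_def)
  define \<phi> where "\<phi> x = (1 / r) *\<^sub>R L x" for x
  define \<psi> where "\<psi> z = L_inv (r *\<^sub>R z)" for z :: "real \<times> real"
  have scaled: "r *\<^sub>R z \<in> L ` K" if "z \<in> sphere 0 1" for z :: "real \<times> real"
    using that r by simp
  have "homeomorphism K (sphere 0 1) \<phi> \<psi>"
  proof (rule homeomorphismI)
    show "continuous_on K \<phi>"
      unfolding \<phi>_def using continuous_on_L K(3) by (intro continuous_intros) (auto elim: continuous_on_subset)
    show "continuous_on (sphere 0 1) \<psi>"
      unfolding \<psi>_def using scaled LK_W
      by (intro continuous_on_compose2[OF continuous_on_L_inv] continuous_intros) auto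
    show "\<phi> ` K \<subseteq> sphere 0 1"
    proof (rule image_subsetI)
      fix x assume "x \<in> K"
      then have "L x \<in> sphere 0 r"
        using r(2) by blast
      then show "\<phi> x \<in> sphere 0 1"
        using r(1) by (simp add: \<phi>_def)
    qed
    show "\<psi> ` sphere 0 1 \<subseteq> K"
    proof (rule image_subsetI)
      fix z :: "real \<times> real" assume "z \<in> sphere 0 1"
      then obtain x where "x \<in> K" "r *\<^sub>R z = L x"
        using scaled by blast
      then show "\<psi> z \<in> K"
        using K(3) by (auto simp: \<psi>_def)
    qed
    show "\<psi> (\<phi> x) = x" if "x \<in> K" for x
      using that K(3) r(1) by (auto simp: \<phi>_def \<psi>_def)
    show "\<phi> (\<psi> z) = z" if "z \<in> sphere 0 1" for z
    proof -
      have "r *\<^sub>R z \<in> W"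
        using scaled[OF that] LK_W by blast
      then show ?thesis
        using r by (simp add: \<phi>_def \<psi>_def)
    qed
  qed
  moreover have "\<phi> (pseudo_khk L V \<omega> \<epsilon> x) = rot (2 * arctan (\<epsilon> * \<omega>)) (\<phi> x)" if "x \<in> K" for x
  proof -
    have "rot (2 * arctan (\<epsilon> * \<omega>)) (L x) \<in> W"
      using rot_L_in_L_image_level[OF K that] LK_W by blast
    then show ?thesis
      by (simp add: pseudo_khk_eq \<phi>_def linear_cmul[OF linear_rot])
  qed
  ultimately show ?thesis
    by blast
qed

lemma pseudo_khk_apply: "pseudo_khk L V \<omega> \<epsilon> x = L_inv (Phi_L \<omega> \<epsilon> (L x))"
  by (simp add: pseudo_khk_def L_inv_def)

lemma Phi_L_in_round_core: "w \<in> round_core \<Longrightarrow> Phi_L \<omega> \<epsilon> w \<in> round_core"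
  by (simp add: Phi_L_eq_rot rot_in_round_core)

lemma lebesgue_khk_domain: "khk_domain L V \<in> sets lebesgue"
  by (simp add: borel_open open_khk_domain)

lemma lebesgue_round_core: "round_core \<in> sets lebesgue"
  by (simp add: borel_open open_round_core)

lemma lebesgue_L_image: "A \<in> sets lebesgue \<Longrightarrow> A \<subseteq> V \<Longrightarrow> L ` A \<in> sets lebesgue"
  by (rule differentiable_image_in_sets_lebesgue) (auto intro: differentiable_on_subset[OF differentiable_on_L])

lemma lebesgue_L_inv_image: "B \<in> sets lebesgue \<Longrightarrow> B \<subseteq> W \<Longrightarrow> L_inv ` B \<in> sets lebesgue"
  by (rule differentiable_image_in_sets_lebesgue) (auto intro: differentiable_on_subset[OF differentiable_on_L_inv])

lemma null_L_image: "A \<in> null_sets lebesgue \<Longrightarrow> A \<subseteq> V \<Longrightarrow> L ` A \<in> null_sets lebesgue"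
  unfolding negligible_iff_null_sets[symmetric]
  by (rule negligible_differentiable_image_negligible) (auto intro: differentiable_on_subset[OF differentiable_on_L])

lemma null_L_inv_image: "B \<in> null_sets lebesgue \<Longrightarrow> B \<subseteq> W \<Longrightarrow> L_inv ` B \<in> null_sets lebesgue"
  unfolding negligible_iff_null_sets[symmetric]
  by (rule negligible_differentiable_image_negligible) (auto intro: differentiable_on_subset[OF differentiable_on_L_inv])

lemma vimage_L_inv_round_core: "L_inv -` A \<inter> round_core = L ` (A \<inter> khk_domain L V)"
proof
  show "L_inv -` A \<inter> round_core \<subseteq> L ` (A \<inter> khk_domain L V)"
  proof
    fix w assume w: "w \<in> L_inv -` A \<inter> round_core"
    then have "L_inv w \<in> A \<inter> khk_domain L V" "w = L (L_inv w)"
      using L_inv_in_khk_domain round_core_subset_W by auto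
    then show "w \<in> L ` (A \<inter> khk_domain L V)"
      by blast
  qed
  show "L ` (A \<inter> khk_domain L V) \<subseteq> L_inv -` A \<inter> round_core"
    by (auto simp: khk_domain_eq)
qed

definition "pullback = distr (restrict_space lebesgue round_core) lebesgue L_inv"

lemma measurable_L_inv: "L_inv \<in> restrict_space lebesgue round_core \<rightarrow>\<^sub>M lebesgue"
proof (rule measurableI)
  fix A :: "(real \<times> real) set" assume "A \<in> sets lebesgue"
  then have "L ` (A \<inter> khk_domain L V) \<in> sets lebesgue"
    using lebesgue_khk_domain khk_domain_subset_V by (intro lebesgue_L_image) auto
  moreover have "L ` (A \<inter> khk_domain L V) \<subseteq> round_core"
    using L_image_khk_domain by auto
  ultimately show "L_inv -` A \<inter> space (restrict_space lebesgue round_core) \<in> sets (restrict_space lebesgue round_core)"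
    using lebesgue_round_core by (simp add: vimage_L_inv_round_core sets_restrict_space_iff)
qed simp

lemma sets_pullback: "sets pullback = sets lebesgue"
  by (simp add: pullback_def)

lemma emeasure_pullback:
  assumes "A \<in> sets lebesgue"
  shows "emeasure pullback A = emeasure lebesgue (L ` (A \<inter> khk_domain L V))"
proof -
  have "emeasure pullback A = emeasure (restrict_space lebesgue round_core) (L ` (A \<inter> khk_domain L V))"
    using emeasure_distr[OF measurable_L_inv assms] by (simp add: pullback_def vimage_L_inv_round_core)
  also have "\<dots> = emeasure lebesgue (L ` (A \<inter> khk_domain L V))"
    using L_image_khk_domain lebesgue_round_core by (intro emeasure_restrict_space) auto
  finally show ?thesis .
qed

lemma absolutely_continuous_pullback: "absolutely_continuous lebesgue pullback"
  unfolding absolutely_continuous_def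
proof
  fix A :: "(real \<times> real) set" assume A: "A \<in> null_sets lebesgue"
  then have "A \<inter> khk_domain L V \<in> null_sets lebesgue"
    using lebesgue_khk_domain by (rule null_set_Int2)
  then have "L ` (A \<inter> khk_domain L V) \<in> null_sets lebesgue"
    using khk_domain_subset_V by (intro null_L_image) auto
  then show "A \<in> null_sets pullback"
    using A by (simp add: null_sets_def sets_pullback emeasure_pullback)
qed

lemma null_pullback_imp_null:
  assumes A: "A \<in> sets lebesgue" "A \<subseteq> khk_domain L V" and null: "emeasure pullback A = 0"
  shows "emeasure lebesgue A = 0"
proof -
  have "L ` A \<in> null_sets lebesgue"
    using A null khk_domain_subset_V by (simp add: emeasure_pullback Int_absorb2 null_sets_def lebesgue_L_image)
  then have "L_inv ` L ` A \<in> null_sets lebesgue"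
    using A(2) khk_domain_subset_V by (intro null_L_inv_image) (auto simp: W_def)
  then show ?thesis
    using A(2) khk_domain_subset_V by (simp add: L_inv_image_L_image null_setsD1)
qed

lemma emeasure_pullback_finite:
  assumes A: "A \<in> sets lebesgue" and bounded: "\<And>x. x \<in> A \<inter> khk_domain L V \<Longrightarrow> norm (L x) \<le> r"
  shows "emeasure pullback A < \<infinity>"
proof -
  have "emeasure pullback A = emeasure lebesgue (L ` (A \<inter> khk_domain L V))"
    by (rule emeasure_pullback[OF A])
  also have "\<dots> \<le> emeasure lebesgue (cball (0::real \<times> real) r)"
    using bounded by (intro emeasure_mono) (auto simp: borel_closed)
  also have "\<dots> < \<infinity>"
    using emeasure_lborel_cball_finite by simp
  finally show ?thesis .
qed

lemma sigma_finite_pullback: "sigma_finite_measure pullback"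
proof (unfold sigma_finite_measure_def, intro exI conjI)
  define B where "B n = L_inv ` (round_core \<inter> cball 0 (real n))" for n :: nat
  let ?A = "range (\<lambda>n. - khk_domain L V \<union> B n)"
  have B_lebesgue: "B n \<in> sets lebesgue" for n
    unfolding B_def using lebesgue_round_core round_core_subset_W by (intro lebesgue_L_inv_image) auto
  have "- khk_domain L V \<in> sets lebesgue"
    using sets.compl_sets[OF lebesgue_khk_domain] by (simp add: Compl_eq_Diff_UNIV)
  then have A_lebesgue: "?A \<subseteq> sets lebesgue"
    using B_lebesgue by auto
  then show "?A \<subseteq> sets pullback"
    by (simp add: sets_pullback)
  show "countable ?A"
    by simp
  have "x \<in> B (nat \<lceil>norm (L x)\<rceil>)" if "x \<in> khk_domain L V" for x
  proof -
    have "L x \<in> round_core \<inter> cball 0 (real (nat \<lceil>norm (L x)\<rceil>))"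
      using that by (auto simp: khk_domain_eq)
    then show ?thesis
      using that khk_domain_subset_V unfolding B_def by force
  qed
  then show "\<Union> ?A = space pullback"
    by (auto simp: pullback_def)
  have B_bounded: "norm (L x) \<le> real n" if "x \<in> B n" for x n
    using that round_core_subset_W by (auto simp: B_def)
  show "\<forall>a\<in>?A. emeasure pullback a \<noteq> \<infinity>"
  proof
    fix a assume "a \<in> ?A"
    then obtain n where a: "a = - khk_domain L V \<union> B n"
      by blast
    have "emeasure pullback a < \<infinity>"
      using A_lebesgue B_bounded[of _ n] by (intro emeasure_pullback_finite[where r = "real n"]) (auto simp: a)
    then show "emeasure pullback a \<noteq> \<infinity>"
      by simp
  qed
qed

lemma L_image_pseudo_khk_vimage:
  assumes "A \<subseteq> khk_domain L V"
  shows "L ` {x \<in> khk_domain L V. pseudo_khk L V \<omega> \<epsilon> x \<in> A} = Phi_L \<omega> \<epsilon> -` L ` A"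
proof
  show "L ` {x \<in> khk_domain L V. pseudo_khk L V \<omega> \<epsilon> x \<in> A} \<subseteq> Phi_L \<omega> \<epsilon> -` L ` A"
  proof
    fix w assume "w \<in> L ` {x \<in> khk_domain L V. pseudo_khk L V \<omega> \<epsilon> x \<in> A}"
    then obtain x where x: "x \<in> khk_domain L V" "pseudo_khk L V \<omega> \<epsilon> x \<in> A" and w: "w = L x"
      by blast
    have "L x \<in> round_core"
      using x(1) by (simp add: khk_domain_eq)
    then have "Phi_L \<omega> \<epsilon> (L x) \<in> W"
      using Phi_L_in_round_core round_core_subset_W by blast
    then have "Phi_L \<omega> \<epsilon> (L x) = L (pseudo_khk L V \<omega> \<epsilon> x)"
      by (simp add: pseudo_khk_apply)
    then show "w \<in> Phi_L \<omega> \<epsilon> -` L ` A"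
      using x(2) w by simp
  qed
  show "Phi_L \<omega> \<epsilon> -` L ` A \<subseteq> L ` {x \<in> khk_domain L V. pseudo_khk L V \<omega> \<epsilon> x \<in> A}"
  proof
    fix w assume "w \<in> Phi_L \<omega> \<epsilon> -` L ` A"
    then obtain a where a: "a \<in> A" "Phi_L \<omega> \<epsilon> w = L a"
      by auto
    then have "Phi_L \<omega> \<epsilon> w \<in> round_core"
      using assms by (auto simp: khk_domain_eq)
    then have w: "w \<in> round_core"
      by (simp add: round_core_def Phi_L_eq_rot)
    then have "L_inv w \<in> khk_domain L V" "L (L_inv w) = w"
      using L_inv_in_khk_domain round_core_subset_W by auto
    moreover have "pseudo_khk L V \<omega> \<epsilon> (L_inv w) = a"
      using a assms khk_domain_subset_V calculation(2) by (auto simp: pseudo_khk_apply)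
    ultimately show "w \<in> L ` {x \<in> khk_domain L V. pseudo_khk L V \<omega> \<epsilon> x \<in> A}"
      using a(1) by (metis (mono_tags, lifting) image_eqI mem_Collect_eq)
  qed
qed

lemma pullback_pseudo_khk_invariant:
  fixes \<epsilon> :: real
  assumes A: "A \<in> sets lebesgue" "A \<subseteq> khk_domain L V"
  defines "A' \<equiv> {x \<in> khk_domain L V. pseudo_khk L V \<omega> \<epsilon> x \<in> A}"
  shows "A' \<in> sets lebesgue" and "emeasure pullback A' = emeasure pullback A"
proof -
  have LA: "L ` A \<in> sets lebesgue"
    using A khk_domain_subset_V by (intro lebesgue_L_image) auto
  have LA': "L ` A' = Phi_L \<omega> \<epsilon> -` L ` A"
    unfolding A'_def by (rule L_image_pseudo_khk_vimage[OF A(2)])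
  have A'_khk: "A' \<subseteq> khk_domain L V"
    by (auto simp: A'_def)
  then have "A' = L_inv ` L ` A'"
    using khk_domain_subset_V by (simp add: L_inv_image_L_image)
  moreover have "L ` A' \<subseteq> W"
    using A'_khk khk_domain_subset_V by (auto simp: W_def)
  ultimately show A'_lebesgue: "A' \<in> sets lebesgue"
    using lebesgue_L_inv_image lebesgue_vimage_Phi_L(1)[OF LA] LA' by metis
  have "emeasure pullback A' = emeasure lebesgue (L ` A')"
    using A'_khk by (simp add: emeasure_pullback[OF A'_lebesgue] Int_absorb2)
  also have "\<dots> = emeasure lebesgue (L ` A)"
    unfolding LA' by (rule lebesgue_vimage_Phi_L(2)[OF LA])
  also have "\<dots> = emeasure pullback A"
    using A by (simp add: emeasure_pullback Int_absorb2)
  finally show "emeasure pullback A' = emeasure pullback A" .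
qed

lemma pseudo_khk_invariant_density:
  "\<exists>m :: real \<times> real \<Rightarrow> real. m \<in> borel_measurable lebesgue \<and> (\<forall>x\<in>khk_domain L V. m x > 0) \<and>
     (\<forall>A\<in>sets lebesgue. A \<subseteq> khk_domain L V \<longrightarrow>
        emeasure (density lebesgue (\<lambda>x. ennreal (m x))) {x \<in> khk_domain L V. pseudo_khk L V \<omega> \<epsilon> x \<in> A}
        = emeasure (density lebesgue (\<lambda>x. ennreal (m x))) A)"
proof -
  obtain m :: "real \<times> real \<Rightarrow> real" where m: "m \<in> borel_measurable lebesgue" "\<forall>x\<in>khk_domain L V. 0 < m x"
    and density_eq: "\<forall>A\<in>sets lebesgue. A \<subseteq> khk_domain L V \<longrightarrow>
      emeasure (density lebesgue (\<lambda>x. ennreal (m x))) A = emeasure pullback A"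
    using sigma_finite_measure.ex_positive_real_density[OF sigma_finite_lebesgue
        absolutely_continuous_pullback sets_pullback sigma_finite_pullback lebesgue_khk_domain
        null_pullback_imp_null]
    by blast
  have "emeasure (density lebesgue (\<lambda>x. ennreal (m x))) {x \<in> khk_domain L V. pseudo_khk L V \<omega> \<epsilon> x \<in> A}
      = emeasure (density lebesgue (\<lambda>x. ennreal (m x))) A"
    if "A \<in> sets lebesgue" "A \<subseteq> khk_domain L V" for A
    using pullback_pseudo_khk_invariant[OF that] that density_eq by auto
  then show ?thesis
    using m by blast
qed

end

theorem proposition14:
  fixes X :: "real \<times> real \<Rightarrow> real \<times> real"
    and H :: "real \<times> real \<Rightarrow> real"
    and L :: "real \<times> real \<Rightarrow> real \<times> real"
    and DL :: "real \<times> real \<Rightarrow> real \<times> real \<Rightarrow> real \<times> real"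
    and U V :: "(real \<times> real) set" and p :: "real \<times> real" and \<omega> \<epsilon> :: real
  assumes "open U" and "analytic_field X U"
    and "isochronous_center X U p"
    and "first_integral_field H X U"
    and "\<omega> > 0"
    and "p \<in> V" and "V \<subseteq> U" and "local_diffeo L V"
    and "\<forall>x\<in>V. (L has_derivative DL x) (at x) \<and> XL \<omega> (L x) = DL x (X x)"
  shows "(\<forall>x\<in>khk_domain L V. \<exists>DF. (pseudo_khk L V \<omega> \<epsilon> has_derivative DF) (at x)
              \<and> X (pseudo_khk L V \<omega> \<epsilon> x) = DF (X x))
       \<and> (\<forall>x\<in>khk_domain L V. H (pseudo_khk L V \<omega> \<epsilon> x) = H x)
       \<and> (\<exists>\<rho>::real. \<forall>h. closed_curve {x\<in>U. H x = h} \<and> {x\<in>U. H x = h} \<subseteq> V \<longrightarrow>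
            (\<exists>\<phi> \<psi>. homeomorphism {x\<in>U. H x = h} (sphere 0 1) \<phi> \<psi> \<and>
               (\<forall>x\<in>{x\<in>U. H x = h}. \<phi> (pseudo_khk L V \<omega> \<epsilon> x) = rot (2 * pi * \<rho>) (\<phi> x))))
       \<and> (\<exists>m :: real \<times> real \<Rightarrow> real. m \<in> borel_measurable lebesgue \<and> (\<forall>x\<in>khk_domain L V. m x > 0) \<and>
            (\<forall>A\<in>sets lebesgue. A \<subseteq> khk_domain L V \<longrightarrow>
               emeasure (density lebesgue (\<lambda>x. ennreal (m x))) {x\<in>khk_domain L V. pseudo_khk L V \<omega> \<epsilon> x \<in> A}
               = emeasure (density lebesgue (\<lambda>x. ennreal (m x))) A))"
proof -
  interpret linearized_center X H L DL U V \<omega>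
    using assms by unfold_locales auto
  have "2 * pi * (arctan (\<epsilon> * \<omega>) / pi) = 2 * arctan (\<epsilon> * \<omega>)"
    by simp
  then have "\<exists>\<rho>::real. \<forall>h. closed_curve {x\<in>U. H x = h} \<and> {x\<in>U. H x = h} \<subseteq> V \<longrightarrow>
      (\<exists>\<phi> \<psi>. homeomorphism {x\<in>U. H x = h} (sphere 0 1) \<phi> \<psi> \<and>
         (\<forall>x\<in>{x\<in>U. H x = h}. \<phi> (pseudo_khk L V \<omega> \<epsilon> x) = rot (2 * pi * \<rho>) (\<phi> x)))"
    using pseudo_khk_conj_rot_on_level by (intro exI[of _ "arctan (\<epsilon> * \<omega>) / pi"]) auto
  then show ?thesis
    using pseudo_khk_Lie_symmetry pseudo_khk_first_integral pseudo_khk_invariant_density by blast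
qed

end
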